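(* Let $G$ be a Lie group, $\mathfrak s\subset\mathfrak g$ a vector subspace, $\varphi:G\to GL(N,\mathbb R)$ a Lie group homomorphism, let $G$ act on $\mathbb R^N\setminus\{0\}$ by $g\cdot x=\varphi(g)x$, and let $\nabla$ be the standard flat affine connection on $\mathbb R^N\setminus\{0\}$. Then for both signs, \[\rho^{\pm}_{G,\mathfrak s}(\mathbb R^N\setminus\{0\},\varphi,\nabla)\le\rho_{G,\mathfrak s}(\mathbb R^N\setminus\{0\},\varphi).\]
   Context: The standard flat connection: $\nabla_X\big(\sum_k f_k\partial/\partial x_k\big)=\sum_k(Xf_k)\partial/\partial x_k$. For $A\in\mathfrak g$, $X_A(p):=(d\sigma_p)_e(A)$ is the fundamental vector field, $\sigma_p(g)=\sigma(g,p)$; $\nabla X$ is the endomorphism $Y\mapsto\nabla_YX$, and $\nabla^M\mathfrak s:=\{\nabla X_A\mid A\in\mathfrak s\}$. $Cl^+_n:=Cl_n$ is the unital real algebra generated by $e_1,\dots,e_n$ with $e_ie_j+e_je_i=-2\delta_{ij}$, and $Cl^-_n:=Cl_{0,n}$ the one with $e_ie_j+e_je_i=2\delta_{ij}$. $\rho^\epsilon_{G,\mathfrak s}(M,\sigma,\nabla)$ is the largest $n$ for which there is a unital $\mathbb R$-algebra homomorphism $f:Cl^\epsilon_n\to\mathrm{End}_{C^\infty(M)}(\mathfrak X(M))$ with $f(e_i)\in\nabla^M\mathfrak s$ for all $i$. $\rho_{G,\mathfrak s}(M,\sigma)$ is the largest $n$ such that there exist $n$ fundamental vector fields $X_{A_1},\dots,X_{A_n}$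 with $A_i\in\mathfrak s$ that are linearly independent at every point of $M$. *)

theory Defs
  imports "HOL-Analysis.Analysis"
begin

text \<open>Vector fields on (an open subset of) R^N are represented as maps real^'n => real^'n.
  The manifold is M = R^N minus the origin.\<close>

type_synonym ('n) vf = "real^('n::finite) \<Rightarrow> real^'n"

definition punctured :: "(real^'n::finite) set" where
  "punctured = - {0}"

text \<open>Fundamental vector field of A for the linear action g.x = phi(g) x, where
  dphi = (d phi)_e is the differential of phi at the identity:
  X_A(p) = (d sigma_p)_e(A) = dphi(A) p.\<close>
definition fund_vf :: "('g \<Rightarrow> real^('n::finite)^'n) \<Rightarrow> 'g \<Rightarrow> 'n vf" where
  "fund_vf dphi A = (\<lambda>p. dphi A *v p)"

text \<open>Standard flat connection: nabla_Y X (p) = (DX)_p (Y p), i.e. sum_k (Y f_k) d/dx_k.\<close>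
definition flat_nabla :: "('n::finite) vf \<Rightarrow> 'n vf \<Rightarrow> 'n vf" where
  "flat_nabla Y X = (\<lambda>p. frechet_derivative X (at p) (Y p))"

definition nabla_end :: "('n::finite) vf \<Rightarrow> ('n vf \<Rightarrow> 'n vf)" where
  "nabla_end X = (\<lambda>Y. flat_nabla Y X)"

definition nablaM :: "('g \<Rightarrow> real^('n::finite)^'n) \<Rightarrow> 'g set \<Rightarrow> ('n vf \<Rightarrow> 'n vf) set" where
  "nablaM dphi s = {nabla_end (fund_vf dphi A) | A. A \<in> s}"

text \<open>A unital algebra homomorphism Cl^eps_n -> End(X(M)) is the same as an assignment
  of the generators e_i to endomorphisms T_i satisfying the defining relations of Cl^eps_n
  (universal property of the presentation).  eps = 1 encodes Cl^+_n (e_i e_j + e_j e_i = -2 delta_ij),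
  eps = -1 encodes Cl^-_n (e_i e_j + e_j e_i = 2 delta_ij).\<close>
definition clifford_rep :: "real \<Rightarrow> nat \<Rightarrow> (nat \<Rightarrow> (('n::finite) vf \<Rightarrow> 'n vf)) \<Rightarrow> bool" where
  "clifford_rep eps n T \<longleftrightarrow>
     (\<forall>i<n. \<forall>j<n. \<forall>Y. \<forall>p\<in>(punctured :: (real^'n) set).
        T i (T j Y) p + T j (T i Y) p = (if i = j then -2 * eps else 0) *\<^sub>R Y p)"

definition rho_pm :: "real \<Rightarrow> ('g \<Rightarrow> real^('n::finite)^'n) \<Rightarrow> 'g set \<Rightarrow> nat" where
  "rho_pm eps dphi s = (GREATEST n. \<exists>T. (\<forall>i<n. T i \<in> nablaM dphi s) \<and> clifford_rep eps n T)"

definition rho :: "('g \<Rightarrow> real^('n::finite)^'n) \<Rightarrow> 'g set \<Rightarrow> nat" where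
  "rho dphi s = (GREATEST n. \<exists>A. (\<forall>i<n. A i \<in> s) \<and>
     (\<forall>p\<in>(punctured :: (real^'n) set).
        inj_on (\<lambda>i. fund_vf dphi (A i) p) {..<n} \<and>
        independent ((\<lambda>i. fund_vf dphi (A i) p) ` {..<n})))"

end

theory Submission
  imports Defs
begin

(* For the linear action the fundamental field of A is p |-> dphi(A) p, so the flat covariant
   derivative of X_A is multiplication by the constant matrix dphi(A). The Clifford relations
   therefore say that the matrices M_i = dphi(A_i) anticommute and square to a nonzero multiple
   of the identity. If sum c_i M_i p = 0 with p /= 0, applying sum c_j M_j and symmetrising
   gives (sum c_i^2) p = 0, so all c_i vanish: the fields X_(A_i) are linearly independent at
   every point, and there can be no more of them than N. *)

lemma nabla_end_fund_vf:
  "nabla_end (fund_vf dphi A) Y = (\<lambda>p. dphi A *v Y p)"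
proof -
  have "\<And>p. frechet_derivative (\<lambda>q. dphi A *v q) (at p) = (\<lambda>v. dphi A *v v)"
    by (metis frechet_derivative_at bounded_linear_imp_has_derivative
        matrix_vector_mul_bounded_linear)
  then show ?thesis
    unfolding nabla_end_def flat_nabla_def fund_vf_def by simp
qed

lemma anticommuting_family_scalars_zero:
  fixes f :: "nat \<Rightarrow> 'a::real_vector \<Rightarrow> 'a" and p :: 'a
  assumes lin: "\<And>i. i < n \<Longrightarrow> linear (f i)"
    and rel: "\<And>i j v. i < n \<Longrightarrow> j < n \<Longrightarrow>
      f i (f j v) + f j (f i v) = (if i = j then -2 * eps else 0) *\<^sub>R v"
    and "eps \<noteq> 0" and "p \<noteq> 0"
    and sum0: "(\<Sum>i<n. c i *\<^sub>R f i p) = 0"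
  shows "\<forall>i<n. c i = 0"
proof -
  define X where "X j i = (c j * c i) *\<^sub>R f j (f i p)" for j i
  have "(\<Sum>j<n. \<Sum>i<n. X j i) = (\<Sum>j<n. c j *\<^sub>R (\<Sum>i<n. c i *\<^sub>R f j (f i p)))"
    by (simp add: X_def scaleR_sum_right)
  also have "\<dots> = (\<Sum>j<n. c j *\<^sub>R f j (\<Sum>i<n. c i *\<^sub>R f i p))"
    using lin by (intro sum.cong) (simp_all add: linear_sum linear_scale)
  also have "\<dots> = 0"
    using sum0 lin by (simp add: linear_0)
  finally have X0: "(\<Sum>j<n. \<Sum>i<n. X j i) = 0" .
  have "X j i + X i j = (if i = j then (c j * c j * (-2 * eps)) *\<^sub>R p else 0)"
    if "j < n" "i < n" for i j
  proof -
    have "X j i + X i j = (c j * c i) *\<^sub>R (f j (f i p) + f i (f j p))"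
      by (simp add: X_def scaleR_add_right mult.commute)
    then show ?thesis
      using rel[of j i p] that by auto
  qed
  then have "(\<Sum>j<n. \<Sum>i<n. X j i + X i j)
      = (\<Sum>j<n. \<Sum>i<n. if i = j then (c j * c j * (-2 * eps)) *\<^sub>R p else 0)"
    by (intro sum.cong) auto
  also have "\<dots> = ((-2 * eps) * (\<Sum>j<n. c j * c j)) *\<^sub>R p"
    by (simp add: sum_distrib_left scaleR_sum_left ac_simps)
  finally have "((-2 * eps) * (\<Sum>j<n. c j * c j)) *\<^sub>R p = 0"
    using X0 sum.swap[of X "{..<n}" "{..<n}"] by (simp add: sum.distrib)
  with \<open>eps \<noteq> 0\<close> \<open>p \<noteq> 0\<close> have "(\<Sum>j<n. c j * c j) = 0"
    by simp
  then show ?thesis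
    by (subst (asm) sum_nonneg_eq_0_iff) auto
qed

lemma independent_family_if_scalars_zero:
  fixes v :: "nat \<Rightarrow> 'a::real_vector"
  assumes zero: "\<And>c. (\<Sum>i<n. c i *\<^sub>R v i) = 0 \<Longrightarrow> \<forall>i<n. c i = 0"
  shows "inj_on v {..<n} \<and> independent (v ` {..<n})"
proof
  show inj: "inj_on v {..<n}"
  proof (rule inj_onI, rule ccontr)
    fix i j assume "i \<in> {..<n}" "j \<in> {..<n}" "v i = v j" "i \<noteq> j"
    define c where "c k = (if k = i then 1 else 0) - (if k = j then 1 else (0::real))" for k
    have "(\<Sum>k<n. c k *\<^sub>R v k)
        = (\<Sum>k<n. if k = i then v k else 0) - (\<Sum>k<n. if k = j then v k else 0)"
      unfolding sum_subtractf[symmetric] by (rule sum.cong) (auto simp: c_def)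
    also have "\<dots> = 0"
      using \<open>i \<in> {..<n}\<close> \<open>j \<in> {..<n}\<close> \<open>v i = v j\<close> by (simp add: sum.delta)
    finally have "\<forall>k<n. c k = 0"
      by (rule zero)
    with \<open>i \<in> {..<n}\<close> \<open>i \<noteq> j\<close> show False
      by (auto simp: c_def)
  qed
  show "independent (v ` {..<n})"
  proof (rule independent_if_scalars_zero)
    fix g x assume g: "(\<Sum>x\<in>v ` {..<n}. g x *\<^sub>R x) = 0" and "x \<in> v ` {..<n}"
    have "(\<Sum>i<n. g (v i) *\<^sub>R v i) = 0"
      using g sum.reindex[OF inj, of "\<lambda>x. g x *\<^sub>R x"] by simp
    then have "\<forall>i<n. g (v i) = 0"
      by (rule zero)
    with \<open>x \<in> v ` {..<n}\<close> show "g x = 0"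
      by auto
  qed simp
qed

lemma clifford_rep_nablaM_obtain_matrices:
  fixes dphi :: "'g \<Rightarrow> real^'n^'n"
  assumes "\<forall>i<n. T i \<in> nablaM dphi s" and "clifford_rep eps n T"
  obtains A where "\<forall>i<n. A i \<in> s"
    and "\<And>i j v. i < n \<Longrightarrow> j < n \<Longrightarrow>
      dphi (A i) *v (dphi (A j) *v v) + dphi (A j) *v (dphi (A i) *v v)
        = (if i = j then -2 * eps else 0) *\<^sub>R v"
proof -
  have "\<forall>i<n. \<exists>B. B \<in> s \<and> T i = nabla_end (fund_vf dphi B)"
    using assms(1) unfolding nablaM_def by blast
  then obtain A where A: "\<And>i. i < n \<Longrightarrow> A i \<in> s \<and> T i = nabla_end (fund_vf dphi (A i))"
    by metis
  have one: "(1::real^'n) \<in> punctured"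
    by (simp add: punctured_def vec_eq_iff)
  show thesis
  proof (rule that)
    show "\<forall>i<n. A i \<in> s"
      using A by blast
    fix i j v assume "i < n" "j < n"
    \<comment> \<open>test the relations on the constant field v at the point 1\<close>
    then have "T i (T j (\<lambda>_. v)) 1 + T j (T i (\<lambda>_. v)) 1 = (if i = j then -2 * eps else 0) *\<^sub>R v"
      using assms(2) one unfolding clifford_rep_def by blast
    with \<open>i < n\<close> \<open>j < n\<close> A show "dphi (A i) *v (dphi (A j) *v v) + dphi (A j) *v (dphi (A i) *v v)
        = (if i = j then -2 * eps else 0) *\<^sub>R v"
      by (simp add: nabla_end_fund_vf)
  qed
qed

lemma clifford_rep_imp_independent_fund_vf:
  fixes dphi :: "'g \<Rightarrow> real^'n^'n"
  assumes "eps \<noteq> 0" and "\<forall>i<n. T i \<in> nablaM dphi s" and "clifford_rep eps n T"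
  shows "\<exists>A. (\<forall>i<n. A i \<in> s) \<and>
     (\<forall>p\<in>(punctured :: (real^'n) set).
        inj_on (\<lambda>i. fund_vf dphi (A i) p) {..<n} \<and>
        independent ((\<lambda>i. fund_vf dphi (A i) p) ` {..<n}))"
proof -
  obtain A where "\<forall>i<n. A i \<in> s"
    and rel: "\<And>i j v. i < n \<Longrightarrow> j < n \<Longrightarrow>
      dphi (A i) *v (dphi (A j) *v v) + dphi (A j) *v (dphi (A i) *v v)
        = (if i = j then -2 * eps else 0) *\<^sub>R v"
    using clifford_rep_nablaM_obtain_matrices[OF assms(2,3)] by blast
  have "inj_on (\<lambda>i. fund_vf dphi (A i) p) {..<n} \<and>
        independent ((\<lambda>i. fund_vf dphi (A i) p) ` {..<n})"
    if "p \<in> punctured" for p :: "real^'n"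
  proof (rule independent_family_if_scalars_zero)
    fix c assume "(\<Sum>i<n. c i *\<^sub>R fund_vf dphi (A i) p) = 0"
    then show "\<forall>i<n. c i = 0"
      using anticommuting_family_scalars_zero[of n "\<lambda>i v. dphi (A i) *v v", OF _ rel]
        \<open>eps \<noteq> 0\<close> that
      by (simp add: fund_vf_def punctured_def matrix_vector_mul_linear)
  qed
  with \<open>\<forall>i<n. A i \<in> s\<close> show ?thesis
    by blast
qed

lemma independent_fund_vf_le_CARD:
  fixes dphi :: "'g \<Rightarrow> real^'n^'n"
  assumes "\<forall>p\<in>(punctured :: (real^'n) set).
        inj_on (\<lambda>i. fund_vf dphi (A i) p) {..<n} \<and>
        independent ((\<lambda>i. fund_vf dphi (A i) p) ` {..<n})"
  shows "n \<le> CARD('n)"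
proof -
  have "(1::real^'n) \<in> punctured"
    by (simp add: punctured_def vec_eq_iff)
  then have "inj_on (\<lambda>i. fund_vf dphi (A i) 1) {..<n}"
    and "independent ((\<lambda>i. fund_vf dphi (A i) (1::real^'n)) ` {..<n})"
    using assms by auto
  then show ?thesis
    using independent_bound card_image by fastforce
qed

lemma Greatest_le_Greatest_nat:
  fixes P Q :: "nat \<Rightarrow> bool"
  assumes "P k" and PQ: "\<And>n. P n \<Longrightarrow> Q n" and bound: "\<And>n. Q n \<Longrightarrow> n \<le> b"
  shows "Greatest P \<le> Greatest Q"
proof -
  have "P (Greatest P)"
    using \<open>P k\<close> PQ bound by (blast intro: GreatestI_nat)
  then show ?thesis
    using PQ bound by (blast intro: Greatest_le_nat)
qed

lemma rho_pm_le_rho: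
  fixes dphi :: "'g \<Rightarrow> real^'n^'n"
  assumes "eps \<noteq> 0"
  shows "rho_pm eps dphi s \<le> rho dphi s"
  unfolding rho_pm_def rho_def
proof (rule Greatest_le_Greatest_nat)
  show "\<exists>T. (\<forall>i<0. T i \<in> nablaM dphi s) \<and> clifford_rep eps 0 T"
    by (auto simp: clifford_rep_def)
qed (use clifford_rep_imp_independent_fund_vf[OF assms] independent_fund_vf_le_CARD in blast)+

theorem corollary4p7:
  fixes dphi :: "'g::euclidean_space \<Rightarrow> real^'n^'n" and s :: "'g set"
  assumes "linear dphi" and "subspace s"
  shows "rho_pm 1 dphi s \<le> rho dphi s \<and> rho_pm (-1) dphi s \<le> rho dphi s"
proof -
  show ?thesis
    using rho_pm_le_rho[of 1 dphi s] rho_pm_le_rho[of "-1" dphi s] by simp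
qed

end
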